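(* Let $m<n$ be positive integers with $n$ even and $(m+n)\mid mn$. Then the Alon-Tarsi number of the complete bipartite graph $K_{m,n}$ equals $\frac{mn}{m+n}+1$.
   Context: For a graph $G$ with vertices ordered $x_1,\dots,x_N$ (treated as variables over a field of characteristic $0$), the graph polynomial is $P_G=\prod_{i<j,\ x_ix_j\in E(G)}(x_i-x_j)$. The Alon-Tarsi number of $G$ is $1+\min\max_k i_k$, where the minimum is over all monomials $x_1^{i_1}\cdots x_N^{i_N}$ with nonzero coefficient in $P_G$. *)

theory Defs
  imports Complex_Main "HOL-Library.Poly_Mapping"
begin

type_synonym mpoly = "(nat \<Rightarrow>\<^sub>0 nat) \<Rightarrow>\<^sub>0 rat"

definition Var :: "nat \<Rightarrow> mpoly" where
  "Var i = Poly_Mapping.single (Poly_Mapping.single i 1) 1"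

text \<open>A graph on the vertices 0, ..., N-1 is given by a symmetric irreflexive edge
relation E; its graph polynomial is the product of (x_i - x_j) over edges with i < j.\<close>

definition graph_poly :: "nat \<Rightarrow> (nat \<Rightarrow> nat \<Rightarrow> bool) \<Rightarrow> mpoly" where
  "graph_poly N E = (\<Prod>(i,j) \<in> {(i,j). i < j \<and> j < N \<and> E i j}. Var i - Var j)"

definition alon_tarsi_number :: "nat \<Rightarrow> (nat \<Rightarrow> nat \<Rightarrow> bool) \<Rightarrow> nat" where
  "alon_tarsi_number N E =
     1 + Min {Max ((\<lambda>k. Poly_Mapping.lookup \<alpha> k) ` {..<N}) | \<alpha> :: nat \<Rightarrow>\<^sub>0 nat. Poly_Mapping.lookup (graph_poly N E) \<alpha> \<noteq> 0}"

text \<open>Complete bipartite graph K_{m,n}: parts {0..<m} and {m..<m+n}.\<close>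

definition complete_bipartite :: "nat \<Rightarrow> nat \<Rightarrow> nat \<Rightarrow> bool" where
  "complete_bipartite m i j \<longleftrightarrow> (i < m) \<noteq> (j < m)"

end

(*
  Write k = mn/(m+n) and B = {m, ..., m+n-1} for the larger part of K_{m,n}.
  Substituting x_v -> -x_v for v in B turns the graph polynomial into the product of
  (x_i + x_j) over the edges, so up to the sign (-1)^(degree in B) every coefficient is
  the number of orientations with the corresponding in-degree sequence: nothing cancels,
  and the monomial of every orientation has a nonzero coefficient.

  Lower bound: the polynomial is homogeneous of degree mn = k(m+n), so every monomial
  has an exponent at least k.
  Upper bound: give the vertex i < m the block [ik, ik+k) of integers and orient the edge
  (i, m+j) towards i exactly when the block contains a number congruent to j mod n.
  Vertex i receives at most k edges. Since mk = n(m-k), the blocks tile [0, mk), which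
  contains m-k numbers congruent to j, lying in distinct blocks because k <= n; so the
  vertex m+j receives at most m-(m-k) = k edges.
*)
theory Submission
  imports Defs
begin

lemma single_add_diff_single:
  fixes \<alpha> :: "'a \<Rightarrow>\<^sub>0 nat"
  assumes "Poly_Mapping.lookup \<alpha> v \<noteq> 0"
  shows "Poly_Mapping.single v 1 + (\<alpha> - Poly_Mapping.single v 1) = \<alpha>"
  using assms by (intro poly_mapping_eqI) (auto simp: lookup_add lookup_minus lookup_single when_def)

lemma lookup_Var_mult:
  fixes p :: mpoly
  shows "Poly_Mapping.lookup (Var v * p) \<alpha> =
    (if Poly_Mapping.lookup \<alpha> v = 0 then 0
     else Poly_Mapping.lookup p (\<alpha> - Poly_Mapping.single v 1))"
proof (cases "Poly_Mapping.lookup \<alpha> v = 0")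
  case True
  moreover have "Poly_Mapping.lookup (Poly_Mapping.single v 1 + \<beta>) v \<noteq> 0" for \<beta> :: "nat \<Rightarrow>\<^sub>0 nat"
    by (simp add: lookup_add)
  ultimately have "(Poly_Mapping.lookup p \<beta> when \<alpha> = Poly_Mapping.single v 1 + \<beta>) = 0" for \<beta>
    by (metis when_simps(2))
  then show ?thesis
    using True by (simp add: Var_def lookup_mult lookup_single when_mult)
next
  case False
  define \<beta> where "\<beta> = \<alpha> - Poly_Mapping.single v 1"
  have "\<alpha> = Poly_Mapping.single v 1 + \<beta>"
    using single_add_diff_single[OF False] by (simp add: \<beta>_def)
  then show ?thesis
    using False by (simp add: Var_def lookup_mult lookup_single when_mult \<beta>_def[symmetric])
qed

definition deg_on :: "nat set \<Rightarrow> (nat \<Rightarrow>\<^sub>0 nat) \<Rightarrow> nat" where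
  "deg_on V \<alpha> = (\<Sum>v\<in>V. Poly_Mapping.lookup \<alpha> v)"

lemma deg_on_add: "deg_on V (\<alpha> + \<beta>) = deg_on V \<alpha> + deg_on V \<beta>"
  by (simp add: deg_on_def lookup_add sum.distrib)

lemma deg_on_single:
  assumes "finite V"
  shows "deg_on V (Poly_Mapping.single u 1) = (if u \<in> V then 1 else 0)"
proof -
  have "deg_on V (Poly_Mapping.single u 1) = (\<Sum>v\<in>V. if u = v then 1 else 0)"
    unfolding deg_on_def by (intro sum.cong) (simp_all add: lookup_single when_def)
  then show ?thesis
    using assms by simp
qed

lemma deg_on_diff_single:
  assumes "finite V" "Poly_Mapping.lookup \<alpha> u \<noteq> 0"
  shows "deg_on V \<alpha> = deg_on V (\<alpha> - Poly_Mapping.single u 1) + (if u \<in> V then 1 else 0)"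
proof -
  have "deg_on V \<alpha> = deg_on V (Poly_Mapping.single u 1 + (\<alpha> - Poly_Mapping.single u 1))"
    by (simp only: single_add_diff_single[OF assms(2)])
  then show ?thesis
    using deg_on_single[OF assms(1), of u] by (simp add: deg_on_add)
qed

definition edge_poly :: "(nat \<times> nat) set \<Rightarrow> mpoly" where
  "edge_poly S = (\<Prod>(i,j)\<in>S. Var i - Var j)"

lemma edge_poly_insert:
  assumes "finite F" "(i,j) \<notin> F"
  shows "edge_poly (insert (i,j) F) = Var i * edge_poly F - Var j * edge_poly F"
  using assms by (simp add: edge_poly_def left_diff_distrib)

lemma edge_poly_homogeneous:
  assumes "finite V" "finite S" "S \<subseteq> V \<times> V" "Poly_Mapping.lookup (edge_poly S) \<alpha> \<noteq> 0"
  shows "deg_on V \<alpha> = card S"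
  using assms(2-)
proof (induction S arbitrary: \<alpha> rule: finite_induct)
  case empty
  then show ?case
    by (simp add: edge_poly_def lookup_one when_def deg_on_def split: if_splits)
next
  case (insert e F)
  obtain i j where e: "e = (i,j)" "i \<in> V" "j \<in> V"
    using insert.prems by auto
  have "Poly_Mapping.lookup (Var i * edge_poly F) \<alpha> \<noteq> 0 \<or>
      Poly_Mapping.lookup (Var j * edge_poly F) \<alpha> \<noteq> 0"
    using insert e by (auto simp: edge_poly_insert lookup_minus)
  then obtain u where "u \<in> V" "Poly_Mapping.lookup \<alpha> u \<noteq> 0"
      "Poly_Mapping.lookup (edge_poly F) (\<alpha> - Poly_Mapping.single u 1) \<noteq> 0"
    using e by (metis lookup_Var_mult)
  then show ?case
    using insert deg_on_diff_single[OF assms(1), of \<alpha> u] by simp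
qed

text \<open>The coefficient of \<open>\<alpha>\<close> after the substitution \<open>x\<^sub>v \<mapsto> -x\<^sub>v\<close> for \<open>v \<in> B\<close>.\<close>

definition signed_coeff :: "nat set \<Rightarrow> mpoly \<Rightarrow> (nat \<Rightarrow>\<^sub>0 nat) \<Rightarrow> rat" where
  "signed_coeff B p \<alpha> = (-1) ^ deg_on B \<alpha> * Poly_Mapping.lookup p \<alpha>"

lemma signed_coeff_diff: "signed_coeff B (p - q) \<alpha> = signed_coeff B p \<alpha> - signed_coeff B q \<alpha>"
  by (simp add: signed_coeff_def lookup_minus algebra_simps)

lemma signed_coeff_Var_mult:
  assumes "finite B"
  shows "signed_coeff B (Var v * p) \<alpha> =
    (if Poly_Mapping.lookup \<alpha> v = 0 then 0
     else (if v \<in> B then -1 else 1) * signed_coeff B p (\<alpha> - Poly_Mapping.single v 1))"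
proof (cases "Poly_Mapping.lookup \<alpha> v = 0")
  case False
  then show ?thesis
    using deg_on_diff_single[OF assms False]
    by (simp add: signed_coeff_def lookup_Var_mult)
qed (simp add: signed_coeff_def lookup_Var_mult)

lemma signed_coeff_edge_poly_insert:
  assumes "finite B" "finite F" "(i,j) \<notin> F" "i \<notin> B" "j \<in> B"
  shows "signed_coeff B (edge_poly (insert (i,j) F)) \<alpha> =
    (if Poly_Mapping.lookup \<alpha> i = 0 then 0
     else signed_coeff B (edge_poly F) (\<alpha> - Poly_Mapping.single i 1)) +
    (if Poly_Mapping.lookup \<alpha> j = 0 then 0
     else signed_coeff B (edge_poly F) (\<alpha> - Poly_Mapping.single j 1))"
  using assms by (simp add: edge_poly_insert signed_coeff_diff signed_coeff_Var_mult)

lemma signed_coeff_edge_poly_nonneg: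
  assumes "finite B" "finite S" "S \<subseteq> (- B) \<times> B"
  shows "0 \<le> signed_coeff B (edge_poly S) \<alpha>"
  using assms(2,3)
proof (induction S arbitrary: \<alpha> rule: finite_induct)
  case empty
  show ?case by (simp add: signed_coeff_def edge_poly_def lookup_one when_def deg_on_def)
next
  case (insert e F)
  obtain i j where "e = (i,j)" "i \<notin> B" "j \<in> B"
    using insert.prems by auto
  then show ?case
    using insert signed_coeff_edge_poly_insert[OF assms(1) insert.hyps(1)] by simp
qed

definition orientation_monom :: "(nat \<times> nat \<Rightarrow> nat) \<Rightarrow> (nat \<times> nat) set \<Rightarrow> nat \<Rightarrow>\<^sub>0 nat" where
  "orientation_monom ch S = (\<Sum>e\<in>S. Poly_Mapping.single (ch e) 1)"

lemma lookup_orientation_monom: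
  assumes "finite S"
  shows "Poly_Mapping.lookup (orientation_monom ch S) v = card {e\<in>S. ch e = v}"
  using assms by (simp add: orientation_monom_def lookup_sum lookup_single when_def sum.If_cases Int_def)

lemma signed_coeff_edge_poly_orientation_monom:
  assumes "finite B" "finite S" "S \<subseteq> (- B) \<times> B" "\<forall>e\<in>S. ch e = fst e \<or> ch e = snd e"
  shows "1 \<le> signed_coeff B (edge_poly S) (orientation_monom ch S)"
  using assms(2-)
proof (induction S rule: finite_induct)
  case empty
  show ?case
    by (simp add: signed_coeff_def edge_poly_def orientation_monom_def deg_on_def)
next
  case (insert e F)
  obtain i j where e: "e = (i,j)" "i \<notin> B" "j \<in> B"
    using insert.prems by auto
  define \<alpha> where "\<alpha> = orientation_monom ch (insert e F)"
  have \<alpha>: "\<alpha> = Poly_Mapping.single (ch e) 1 + orientation_monom ch F"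
    using insert.hyps by (simp add: orientation_monom_def \<alpha>_def)
  have IH: "1 \<le> signed_coeff B (edge_poly F) (\<alpha> - Poly_Mapping.single (ch e) 1)"
    using insert by (simp add: \<alpha>)
  define T where "T u = (if Poly_Mapping.lookup \<alpha> u = 0 then 0
    else signed_coeff B (edge_poly F) (\<alpha> - Poly_Mapping.single u 1))" for u
  have decomp: "signed_coeff B (edge_poly (insert e F)) \<alpha> = T i + T j"
    using signed_coeff_edge_poly_insert[OF assms(1) insert.hyps(1)] insert.hyps(2) e
    by (simp add: T_def)
  have "0 \<le> T i" "0 \<le> T j"
    using insert.prems signed_coeff_edge_poly_nonneg[OF assms(1) insert.hyps(1)] by (auto simp: T_def)
  moreover have "1 \<le> T (ch e)"
    using IH by (simp add: T_def \<alpha> lookup_add)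
  moreover have "ch e = i \<or> ch e = j"
    using insert.prems e by auto
  ultimately have "1 \<le> T i + T j"
    by auto
  then show ?case
    using decomp by (simp add: \<alpha>_def)
qed

corollary lookup_edge_poly_orientation_monom:
  assumes "finite B" "finite S" "S \<subseteq> (- B) \<times> B" "\<forall>e\<in>S. ch e = fst e \<or> ch e = snd e"
  shows "Poly_Mapping.lookup (edge_poly S) (orientation_monom ch S) \<noteq> 0"
  using signed_coeff_edge_poly_orientation_monom[OF assms] by (auto simp: signed_coeff_def)

lemma alon_tarsi_number_eqI:
  assumes lower: "\<And>\<beta>. Poly_Mapping.lookup (graph_poly N E) \<beta> \<noteq> 0 \<Longrightarrow> \<exists>v<N. k \<le> Poly_Mapping.lookup \<beta> v"
    and witness: "Poly_Mapping.lookup (graph_poly N E) \<alpha> \<noteq> 0"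
    and witness_le: "\<And>v. v < N \<Longrightarrow> Poly_Mapping.lookup \<alpha> v \<le> k"
  shows "alon_tarsi_number N E = k + 1"
proof -
  define mx where "mx \<beta> = Max ((\<lambda>v. Poly_Mapping.lookup \<beta> v) ` {..<N})" for \<beta> :: "nat \<Rightarrow>\<^sub>0 nat"
  define T where "T = {mx \<beta> | \<beta>. Poly_Mapping.lookup (graph_poly N E) \<beta> \<noteq> 0}"
  have ge: "k \<le> mx \<beta>" if nz: "Poly_Mapping.lookup (graph_poly N E) \<beta> \<noteq> 0" for \<beta>
  proof -
    obtain v where "v < N" "k \<le> Poly_Mapping.lookup \<beta> v"
      using lower[OF nz] by blast
    moreover have "Poly_Mapping.lookup \<beta> v \<le> mx \<beta>"
      unfolding mx_def by (rule Max_ge) (use \<open>v < N\<close> in auto)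
    ultimately show ?thesis
      by linarith
  qed
  have "0 < N"
    using lower[OF witness] by auto
  then have "mx \<alpha> \<le> k"
    unfolding mx_def using witness_le by (subst Max_le_iff) auto
  then have "k \<in> T"
    using ge[OF witness] witness unfolding T_def by (metis (mono_tags, lifting) le_antisym mem_Collect_eq)
  moreover have "finite T"
    by (rule finite_subset[of _ "mx ` Poly_Mapping.keys (graph_poly N E)"])
      (auto simp: T_def in_keys_iff)
  ultimately have "Min T = k"
    using ge unfolding T_def by (intro Min_eqI) auto
  then show ?thesis
    by (simp add: alon_tarsi_number_def T_def mx_def)
qed

lemma exists_ge_of_sum_ge:
  fixes f :: "'a \<Rightarrow> nat"
  assumes "finite V" "V \<noteq> {}" "k * card V \<le> sum f V"
  shows "\<exists>v\<in>V. k \<le> f v"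
proof (rule ccontr)
  assume "\<not> (\<exists>v\<in>V. k \<le> f v)"
  then have "sum f V < (\<Sum>v\<in>V. k)"
    using assms(1,2) by (intro sum_strict_mono) auto
  then show False
    using assms(3) by (simp add: mult.commute)
qed

definition block_meets :: "nat \<Rightarrow> nat \<Rightarrow> nat \<Rightarrow> nat \<Rightarrow> bool" where
  "block_meets k n i j \<longleftrightarrow> (\<exists>s. i * k \<le> s \<and> s < i * k + k \<and> s mod n = j)"

lemma block_meets_div:
  assumes "0 < k"
  shows "block_meets k n (s div k) (s mod n)"
  unfolding block_meets_def
proof (intro exI conjI)
  show "s div k * k \<le> s"
    by (metis div_mult_mod_eq le_add1)
  show "s < s div k * k + k"
    using assms by (metis div_mult_mod_eq add_less_cancel_left mod_less_divisor)
qed simp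

lemma card_block_meets_ge:
  assumes "0 < k" "k \<le> n" "m * k = n * c" "j < n"
  shows "c \<le> card {i\<in>{..<m}. block_meets k n i j}"
proof -
  define g where "g r = (j + n * r) div k" for r
  have "g r < g (Suc r)" for r
  proof -
    have "g r < (j + n * r + k) div k"
      using assms(1) by (simp add: g_def)
    also have "\<dots> \<le> g (Suc r)"
      using assms(2) unfolding g_def by (intro div_le_mono) simp
    finally show ?thesis .
  qed
  then have inj: "inj_on g {..<c}"
    by (intro strict_mono_imp_inj_on) (simp add: strict_mono_Suc_iff)
  have "g r < m \<and> block_meets k n (g r) j" if "r < c" for r
  proof -
    have "j + n * r < n * Suc r"
      using assms(4) by simp
    also have "\<dots> \<le> n * c"
      using \<open>r < c\<close> by (intro mult_le_mono2) simp
    finally have "j + n * r < m * k"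
      using assms(3) by simp
    then show ?thesis
      using assms block_meets_div[OF assms(1), of n "j + n * r"]
      by (simp add: g_def div_less_iff_less_mult)
  qed
  then have "g ` {..<c} \<subseteq> {i\<in>{..<m}. block_meets k n i j}"
    by auto
  then have "card (g ` {..<c}) \<le> card {i\<in>{..<m}. block_meets k n i j}"
    by (intro card_mono) auto
  then show ?thesis
    using inj by (simp add: card_image)
qed

definition block_orientation :: "nat \<Rightarrow> nat \<Rightarrow> nat \<Rightarrow> nat \<times> nat \<Rightarrow> nat" where
  "block_orientation m n k = (\<lambda>(i, j). if block_meets k n i (j - m) then i else j)"

lemma block_orientation_endpoint:
  "block_orientation m n k e = fst e \<or> block_orientation m n k e = snd e"
  by (cases e) (simp add: block_orientation_def)

lemma card_block_orientation_in_small_part_le: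
  assumes "v < m"
  shows "card {e \<in> {..<m} \<times> {m..<m+n}. block_orientation m n k e = v} \<le> k"
proof -
  have "{e \<in> {..<m} \<times> {m..<m+n}. block_orientation m n k e = v}
      \<subseteq> (\<lambda>s. (v, m + s mod n)) ` {v * k..<v * k + k}"
  proof
    fix e
    assume "e \<in> {e \<in> {..<m} \<times> {m..<m+n}. block_orientation m n k e = v}"
    then obtain i j where e: "e = (i, j)" "m \<le> j" "block_orientation m n k (i, j) = v"
      by auto
    then have "i = v" "block_meets k n v (j - m)"
      using assms by (auto simp: block_orientation_def split: if_splits)
    then obtain s where "s \<in> {v * k..<v * k + k}" "j = m + s mod n"
      using \<open>m \<le> j\<close> by (auto simp: block_meets_def)
    then show "e \<in> (\<lambda>s. (v, m + s mod n)) ` {v * k..<v * k + k}"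
      using e(1) \<open>i = v\<close> by blast
  qed
  then have "card {e \<in> {..<m} \<times> {m..<m+n}. block_orientation m n k e = v}
      \<le> card ((\<lambda>s. (v, m + s mod n)) ` {v * k..<v * k + k})"
    by (rule card_mono[rotated]) simp
  also have "\<dots> \<le> card {v * k..<v * k + k}"
    by (rule card_image_le) simp
  finally show ?thesis
    by simp
qed

lemma card_block_orientation_in_large_part_le:
  assumes "0 < k" "k \<le> n" "k \<le> m" "m * k = n * (m - k)" "m \<le> v" "v < m + n"
  shows "card {e \<in> {..<m} \<times> {m..<m+n}. block_orientation m n k e = v} \<le> k"
proof -
  have "v - m < n"
    using assms(5,6) by simp
  have "{e \<in> {..<m} \<times> {m..<m+n}. block_orientation m n k e = v}
      \<subseteq> (\<lambda>i. (i, v)) ` ({..<m} - {i\<in>{..<m}. block_meets k n i (v - m)})"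
  proof
    fix e
    assume "e \<in> {e \<in> {..<m} \<times> {m..<m+n}. block_orientation m n k e = v}"
    then obtain i j where e: "e = (i, j)" "i < m" "block_orientation m n k (i, j) = v"
      by auto
    then have "j = v" "\<not> block_meets k n i (v - m)"
      using assms(5) by (auto simp: block_orientation_def split: if_splits)
    then show "e \<in> (\<lambda>i. (i, v)) ` ({..<m} - {i\<in>{..<m}. block_meets k n i (v - m)})"
      using e(1,2) by blast
  qed
  then have "card {e \<in> {..<m} \<times> {m..<m+n}. block_orientation m n k e = v}
      \<le> card ((\<lambda>i. (i, v)) ` ({..<m} - {i\<in>{..<m}. block_meets k n i (v - m)}))"
    by (rule card_mono[rotated]) simp
  also have "\<dots> \<le> card ({..<m} - {i\<in>{..<m}. block_meets k n i (v - m)})"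
    by (rule card_image_le) simp
  also have "\<dots> = m - card {i\<in>{..<m}. block_meets k n i (v - m)}"
    by (subst card_Diff_subset) auto
  also have "\<dots> \<le> k"
    using card_block_meets_ge[OF assms(1,2,4) \<open>v - m < n\<close>] by simp
  finally show ?thesis .
qed

lemma lookup_block_orientation_monom_le:
  assumes "0 < k" "k \<le> n" "k \<le> m" "m * k = n * (m - k)" "v < m + n"
  shows "Poly_Mapping.lookup (orientation_monom (block_orientation m n k) ({..<m} \<times> {m..<m+n})) v \<le> k"
  using card_block_orientation_in_small_part_le[of v m n k]
    card_block_orientation_in_large_part_le[OF assms(1-4), of v] assms(5)
  by (cases "v < m") (simp_all add: lookup_orientation_monom)

lemma graph_poly_complete_bipartite:
  "graph_poly (m + n) (complete_bipartite m) = edge_poly ({..<m} \<times> {m..<m+n})"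
  unfolding graph_poly_def edge_poly_def complete_bipartite_def
  by (rule arg_cong[where f = "prod _"]) auto

lemma half_harmonic_mean_bounds:
  fixes m n k :: nat
  assumes "0 < m" "0 < n" "k * (m + n) = m * n"
  shows "0 < k" "k \<le> m" "k \<le> n" "m * k = n * (m - k)"
proof -
  show "0 < k"
    using assms by (cases k) auto
  have "k * (m + n) \<le> m * (m + n)" "k * (m + n) \<le> n * (m + n)"
    using assms(3) by (simp_all add: algebra_simps)
  then show "k \<le> m" "k \<le> n"
    using assms(1) by simp_all
  have "n * (m - k) = k * m + k * n - n * k"
    using assms(3) by (simp add: diff_mult_distrib2 algebra_simps)
  then show "m * k = n * (m - k)"
    by simp
qed

theorem mainTheorem4:
  fixes m n :: nat
  assumes "0 < m" and "m < n" and "even n" and "(m + n) dvd (m * n)"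
  shows "alon_tarsi_number (m + n) (complete_bipartite m) = m * n div (m + n) + 1"
proof -
  define k where "k = m * n div (m + n)"
  define E where "E = {..<m} \<times> {m..<m+n}"
  have kN: "k * (m + n) = m * n"
    using assms(4) by (simp add: k_def)
  note k = half_harmonic_mean_bounds[OF assms(1) _ kN]
  have E: "finite E" "E \<subseteq> (- {m..<m+n}) \<times> {m..<m+n}" "E \<subseteq> {..<m+n} \<times> {..<m+n}" "card E = m * n"
    by (auto simp: E_def)
  show ?thesis
    unfolding k_def[symmetric]
  proof (rule alon_tarsi_number_eqI)
    fix \<alpha> assume "Poly_Mapping.lookup (graph_poly (m + n) (complete_bipartite m)) \<alpha> \<noteq> 0"
    then have "deg_on {..<m+n} \<alpha> = k * card {..<m+n}"
      using edge_poly_homogeneous[of "{..<m+n}" E \<alpha>] E kN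
      unfolding graph_poly_complete_bipartite E_def[symmetric] by simp
    then show "\<exists>v<m+n. k \<le> Poly_Mapping.lookup \<alpha> v"
      using exists_ge_of_sum_ge[of "{..<m+n}" k "Poly_Mapping.lookup \<alpha>"] assms(1)
      by (auto simp: deg_on_def)
  next
    show "Poly_Mapping.lookup (graph_poly (m + n) (complete_bipartite m))
        (orientation_monom (block_orientation m n k) E) \<noteq> 0"
      using lookup_edge_poly_orientation_monom[of "{m..<m+n}" E] E block_orientation_endpoint
      unfolding graph_poly_complete_bipartite E_def[symmetric] by simp
  qed (use lookup_block_orientation_monom_le[of k n m] k assms(2) in \<open>simp add: E_def\<close>)
qed

end
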